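(* Let $a<b$ be real numbers and let $h:[a,b]\to\mathbb{R}$ have a continuous first derivative that is uniformly bounded on $[a,b]$. For $n\ge2$ define the deterministic inputs $x_{i,n}=a+(b-a)\frac{i-1}{n-1}$, $i=1,\dots,n$. Then $$B_n^0=\frac{1}{\sqrt n}\sum_{i=2}^n\big|h(x_{i,n})-h(x_{i-1,n})\big|$$ is bounded as $n\to\infty$. Moreover, let $\varepsilon_1,\varepsilon_2,\dots$ be i.i.d. random variables with cdf $F_\varepsilon$, mean $0$ and finite variance, put $Y_{i,n}=h(x_{i,n})+\varepsilon_i$ and $$B_n=\frac{1}{\sqrt n}\sum_{i=2}^n\big|Y_{i,n}-Y_{i-1,n}\big|.$$ If $B_n=O_{\mathbf P}(1)$ as $n\to\infty$, then $F_\varepsilon$ is degenerate at $0$.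
   Context: $\xi_n=O_{\mathbf P}(1)$ means the sequence of random variables $\xi_n$ is bounded in probability: for every $\delta>0$ there exist $M$ and $n_0$ with $\mathbf P(|\xi_n|>M)<\delta$ for all $n\ge n_0$. *)

theory Defs
  imports "HOL-Probability.Probability"
begin

definition design :: "real \<Rightarrow> real \<Rightarrow> nat \<Rightarrow> nat \<Rightarrow> real" where
  "design a b n i = a + (b - a) * (real i - 1) / (real n - 1)"

definition Bzero :: "(real \<Rightarrow> real) \<Rightarrow> real \<Rightarrow> real \<Rightarrow> nat \<Rightarrow> real" where
  "Bzero h a b n = (1 / sqrt (real n)) *
     (\<Sum>i=2..n. \<bar>h (design a b n i) - h (design a b n (i - 1))\<bar>)"

definition Yobs :: "(real \<Rightarrow> real) \<Rightarrow> real \<Rightarrow> real \<Rightarrow> (nat \<Rightarrow> 'a \<Rightarrow> real) \<Rightarrow> nat \<Rightarrow> nat \<Rightarrow> 'a \<Rightarrow> real" where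
  "Yobs h a b eps n i \<omega> = h (design a b n i) + eps i \<omega>"

definition Bstat :: "(real \<Rightarrow> real) \<Rightarrow> real \<Rightarrow> real \<Rightarrow> (nat \<Rightarrow> 'a \<Rightarrow> real) \<Rightarrow> nat \<Rightarrow> 'a \<Rightarrow> real" where
  "Bstat h a b eps n \<omega> = (1 / sqrt (real n)) *
     (\<Sum>i=2..n. \<bar>Yobs h a b eps n i \<omega> - Yobs h a b eps n (i - 1) \<omega>\<bar>)"

definition bounded_in_prob :: "'a measure \<Rightarrow> (nat \<Rightarrow> 'a \<Rightarrow> real) \<Rightarrow> bool" where
  "bounded_in_prob M X \<longleftrightarrow>
     (\<forall>\<delta>>0. \<exists>C n0. \<forall>n\<ge>n0. measure M {\<omega>\<in>space M. \<bar>X n \<omega>\<bar> > C} < \<delta>)"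

end

theory Submission
  imports Defs "HOL-Real_Asymp.Real_Asymp"
begin

text \<open>For h Lipschitz with constant L the increments of h along the design are at most
  L (b - a) / (n - 1), so B_n^0 \<le> L (b - a) / sqrt n. If the noise is not a.s. zero, its zero
  mean yields levels t1 < t2 with P(eps \<le> t1) = q1 > 0 and P(eps \<ge> t2) = q2 > 0. The m
  disjoint pairs (eps_{2k+1}, eps_{2k+2}) are independent, and by Chebyshev more than m q1 q2 / 2
  of them are crossings eps_{2k+1} \<le> t1 < t2 \<le> eps_{2k+2} with probability tending to 1.
  Each crossing contributes t2 - t1 to the noise part of the sum, so
  B_{2m} \<ge> (t2 - t1) q1 q2 sqrt (m / 8) - B_{2m}^0 with probability tending to 1, which
  contradicts B_n = O_P(1).\<close>

lemma design_mem:
  assumes "a \<le> b" "1 \<le> i" "i \<le> n"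
  shows "design a b n i \<in> {a..b}"
proof -
  define c where "c = (real i - 1) / (real n - 1)"
  have "0 \<le> c" "c \<le> 1"
    using assms by (auto simp: c_def divide_le_eq_1)
  then have "0 \<le> (b - a) * c" "(b - a) * c \<le> b - a"
    using assms(1) by (auto intro: mult_left_le)
  moreover have "design a b n i = a + (b - a) * c"
    by (simp add: design_def c_def)
  ultimately show ?thesis by simp
qed

lemma design_diff:
  assumes "1 \<le> i"
  shows "design a b n i - design a b n (i - 1) = (b - a) / (real n - 1)"
  using assms by (simp add: design_def of_nat_diff diff_divide_distrib[symmetric] algebra_simps)

lemma abs_Bzero_le:
  assumes "a \<le> b" and lip: "L-lipschitz_on {a..b} h"
  shows "\<bar>Bzero h a b n\<bar> \<le> L * (b - a)"
proof (cases "n \<ge> 2")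
  case False
  then show ?thesis
    using assms lipschitz_on_nonneg[OF lip] by (simp add: Bzero_def)
next
  case True
  let ?S = "\<Sum>i=2..n. \<bar>h (design a b n i) - h (design a b n (i - 1))\<bar>"
  have "?S \<le> (\<Sum>i=2..n. L * ((b - a) / (real n - 1)))"
  proof (rule sum_mono)
    fix i assume i: "i \<in> {2..n}"
    then have "design a b n i \<in> {a..b}" "design a b n (i - 1) \<in> {a..b}"
      using design_mem[OF assms(1), of i n] design_mem[OF assms(1), of "i - 1" n] by auto
    then have "\<bar>h (design a b n i) - h (design a b n (i - 1))\<bar>
        \<le> L * \<bar>design a b n i - design a b n (i - 1)\<bar>"
      using lipschitz_onD[OF lip] by (simp add: dist_real_def)
    then show "\<bar>h (design a b n i) - h (design a b n (i - 1))\<bar> \<le> L * ((b - a) / (real n - 1))"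
      using design_diff[of i] i assms(1) by simp
  qed
  also have "\<dots> = L * (b - a)"
    using True by (simp add: of_nat_diff)
  finally have "?S \<le> L * (b - a)" .
  moreover have "?S / sqrt (real n) \<le> ?S"
    using divide_left_mono[of 1 "sqrt (real n)" ?S] True by (simp add: sum_nonneg)
  ultimately show ?thesis
    by (simp add: Bzero_def sum_nonneg)
qed

lemma Bseq_Bzero:
  assumes "a \<le> b"
    and deriv: "\<forall>x\<in>{a..b}. (h has_real_derivative h' x) (at x within {a..b})"
    and "bounded (h' ` {a..b})"
  shows "Bseq (\<lambda>n. Bzero h a b n)"
proof -
  obtain L where "0 < L" and L: "\<forall>x\<in>{a..b}. \<bar>h' x\<bar> \<le> L"
    using \<open>bounded (h' ` {a..b})\<close> by (auto simp: bounded_pos)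
  have "L-lipschitz_on {a..b} h"
  proof (rule lipschitz_onI)
    fix x y assume "x \<in> {a..b}" "y \<in> {a..b}"
    then show "dist (h x) (h y) \<le> L * dist x y"
      using field_differentiable_bound[of "{a..b}" h h' L x y] deriv L by (simp add: dist_real_def)
  qed (use \<open>0 < L\<close> in simp)
  then show ?thesis
    using abs_Bzero_le \<open>a \<le> b\<close> by (intro BseqI'[where K="L * (b - a)"]) auto
qed

lemma Bstat_ge_noise_minus_Bzero:
  "(\<Sum>i=2..n. \<bar>eps i \<omega> - eps (i - 1) \<omega>\<bar>) / sqrt (real n) - \<bar>Bzero h a b n\<bar>
     \<le> Bstat h a b eps n \<omega>"
proof -
  let ?dh = "\<lambda>i. h (design a b n i) - h (design a b n (i - 1))"
  have "(\<Sum>i=2..n. \<bar>eps i \<omega> - eps (i - 1) \<omega>\<bar>)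
      \<le> (\<Sum>i=2..n. \<bar>Yobs h a b eps n i \<omega> - Yobs h a b eps n (i - 1) \<omega>\<bar>) + (\<Sum>i=2..n. \<bar>?dh i\<bar>)"
    unfolding sum.distrib[symmetric] Yobs_def by (intro sum_mono) linarith
  then show ?thesis
    by (simp add: Bstat_def Bzero_def sum_nonneg divide_right_mono add_divide_distrib[symmetric] field_simps)
qed

lemma crossings_le_sum_abs_increments:
  fixes e :: "nat \<Rightarrow> real"
  assumes "t1 \<le> t2"
  shows "(t2 - t1) * (\<Sum>k<m. of_bool (e (2*k+1) \<le> t1 \<and> t2 \<le> e (2*k+2)))
           \<le> (\<Sum>i=2..2*m. \<bar>e i - e (i - 1)\<bar>)"
proof -
  have "(t2 - t1) * (\<Sum>k<m. of_bool (e (2*k+1) \<le> t1 \<and> t2 \<le> e (2*k+2)))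
      \<le> (\<Sum>k<m. \<bar>e (2*k+2) - e (2*k+2 - 1)\<bar>)"
    unfolding sum_distrib_left by (intro sum_mono) (auto simp: assms)
  also have "\<dots> = (\<Sum>i\<in>(\<lambda>k. 2*k+2) ` {..<m}. \<bar>e i - e (i - 1)\<bar>)"
    by (subst sum.reindex) (auto simp: inj_on_def)
  also have "\<dots> \<le> (\<Sum>i=2..2*m. \<bar>e i - e (i - 1)\<bar>)"
    by (intro sum_mono2) auto
  finally show ?thesis .
qed

lemma Bstat_ge_crossings:
  assumes "t1 \<le> t2"
  shows "(t2 - t1) * (\<Sum>k<m. of_bool (eps (2*k+1) \<omega> \<le> t1 \<and> t2 \<le> eps (2*k+2) \<omega>)) / sqrt (2 * real m)
           - \<bar>Bzero h a b (2*m)\<bar>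
         \<le> Bstat h a b eps (2*m) \<omega>"
proof -
  have "(t2 - t1) * (\<Sum>k<m. of_bool (eps (2*k+1) \<omega> \<le> t1 \<and> t2 \<le> eps (2*k+2) \<omega>)) / sqrt (2 * real m)
      \<le> (\<Sum>i=2..2*m. \<bar>eps i \<omega> - eps (i - 1) \<omega>\<bar>) / sqrt (real (2*m))"
    using crossings_le_sum_abs_increments[OF assms, of "\<lambda>i. eps i \<omega>" m] by (simp add: divide_right_mono)
  then show ?thesis
    using Bstat_ge_noise_minus_Bzero[of eps \<omega> "2*m" h a b] by linarith
qed

context prob_space
begin

lemma exists_prob_ge_pos_if_not_AE_nonpos:
  fixes X :: "'a \<Rightarrow> real"
  assumes [measurable]: "X \<in> borel_measurable M" and not_nonpos: "\<not> (AE \<omega> in M. X \<omega> \<le> 0)"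
  shows "\<exists>s>0. prob {\<omega>\<in>space M. s \<le> X \<omega>} > 0"
proof (rule ccontr)
  assume "\<not> ?thesis"
  then have "\<not> prob {\<omega>\<in>space M. inverse (real (Suc n)) \<le> X \<omega>} > 0" for n
    by (metis inverse_positive_iff_positive of_nat_0_less_iff zero_less_Suc)
  then have "prob {\<omega>\<in>space M. inverse (real (Suc n)) \<le> X \<omega>} = 0" for n
    using measure_nonneg[of M] by (simp add: not_less order.antisym)
  then have "AE \<omega> in M. \<not> inverse (real (Suc n)) \<le> X \<omega>" for n
    by (simp add: prob_Collect_eq_0 del: of_nat_Suc)
  then have "AE \<omega> in M. \<forall>n. \<not> inverse (real (Suc n)) \<le> X \<omega>"
    by (simp add: AE_all_countable del: of_nat_Suc)
  then have "AE \<omega> in M. X \<omega> \<le> 0"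
    by eventually_elim (metis reals_Archimedean not_le less_imp_le)
  with not_nonpos show False ..
qed

lemma exists_two_sided_levels:
  fixes X :: "'a \<Rightarrow> real"
  assumes [measurable]: "X \<in> borel_measurable M"
    and "integrable M X" "expectation X = 0" "\<not> (AE \<omega> in M. X \<omega> = 0)"
  shows "\<exists>t1 t2. t1 < t2 \<and> prob {\<omega>\<in>space M. X \<omega> \<le> t1} > 0 \<and> prob {\<omega>\<in>space M. t2 \<le> X \<omega>} > 0"
proof -
  have not_nonpos: "\<not> (AE \<omega> in M. Y \<omega> \<le> 0)"
    if "integrable M Y" "expectation Y = 0" "\<not> (AE \<omega> in M. Y \<omega> = 0)" for Y :: "'a \<Rightarrow> real"
  proof
    assume "AE \<omega> in M. Y \<omega> \<le> 0"
    then have "AE \<omega> in M. Y \<omega> = 0"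
      using integral_nonneg_eq_0_iff_AE[of M "\<lambda>\<omega>. - Y \<omega>"] that(1,2) by auto
    with that(3) show False ..
  qed
  obtain s where "s > 0" "prob {\<omega>\<in>space M. s \<le> X \<omega>} > 0"
    using exists_prob_ge_pos_if_not_AE_nonpos not_nonpos[of X] assms by blast
  moreover obtain s' where "s' > 0" "prob {\<omega>\<in>space M. s' \<le> - X \<omega>} > 0"
    using exists_prob_ge_pos_if_not_AE_nonpos[of "\<lambda>\<omega>. - X \<omega>"] not_nonpos[of "\<lambda>\<omega>. - X \<omega>"] assms
    by (auto simp del: neg_le_0_iff_le)
  moreover have "{\<omega>\<in>space M. s' \<le> - X \<omega>} = {\<omega>\<in>space M. X \<omega> \<le> - s'}"
    by auto
  ultimately show ?thesis
    by (intro exI[of _ "- s'"] exI[of _ s]) auto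
qed

lemma cdf_distr_eq_step_if_AE_zero:
  fixes X :: "'a \<Rightarrow> real"
  assumes [measurable]: "X \<in> borel_measurable M" and zero: "AE \<omega> in M. X \<omega> = 0"
  shows "cdf (distr M borel X) = (\<lambda>x. if 0 \<le> x then 1 else 0)"
proof
  fix x :: real
  have "cdf (distr M borel X) x = prob {\<omega>\<in>space M. X \<omega> \<le> x}"
    unfolding cdf_def by (subst measure_distr) (auto intro!: arg_cong[where f=prob])
  also have "\<dots> = (if 0 \<le> x then 1 else 0)"
  proof (cases "0 \<le> x")
    case True
    from zero have "AE \<omega> in M. X \<omega> \<le> x"
      by eventually_elim (use True in simp)
    then show ?thesis
      using True prob_Collect_eq_1[of "\<lambda>\<omega>. X \<omega> \<le> x"] by simp
  next
    case False
    from zero have "AE \<omega> in M. \<not> X \<omega> \<le> x"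
      by eventually_elim (use False in simp)
    then show ?thesis
      using False prob_Collect_eq_0[of "\<lambda>\<omega>. X \<omega> \<le> x"] by simp
  qed
  finally show "cdf (distr M borel X) x = (if 0 \<le> x then 1 else 0)" .
qed

lemma prob_INT_vimage_iid:
  assumes ind: "indep_vars (\<lambda>_. borel) X I"
    and iid: "\<forall>i\<in>I. distr M borel (X i) = distr M borel Y" and [measurable]: "Y \<in> borel_measurable M"
    and J: "finite J" "J \<noteq> {}" "J \<subseteq> I" and A: "\<And>i. i \<in> J \<Longrightarrow> A i \<in> sets borel"
  shows "prob (\<Inter>i\<in>J. X i -` A i \<inter> space M) = (\<Prod>i\<in>J. prob (Y -` A i \<inter> space M))"
proof -
  have "prob (X i -` A i \<inter> space M) = prob (Y -` A i \<inter> space M)" if i: "i \<in> J" for i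
  proof -
    have "X i \<in> borel_measurable M"
      using ind i J(3) by (auto simp: indep_vars_def)
    then have "prob (X i -` A i \<inter> space M) = measure (distr M borel (X i)) (A i)"
      using A i by (simp add: measure_distr)
    also have "\<dots> = prob (Y -` A i \<inter> space M)"
      using iid i J(3) A by (auto simp: measure_distr)
    finally show ?thesis .
  qed
  then show ?thesis
    using indep_varsD[OF ind J(2,1,3)] A by simp
qed

lemma integral_square_sum_centered_indicators:
  fixes E :: "nat \<Rightarrow> 'a set" and p :: real and m :: nat
  assumes E: "\<And>k. E k \<in> events" and pE: "\<And>k. prob (E k) = p"
    and pEE: "\<And>k l. k \<noteq> l \<Longrightarrow> prob (E k \<inter> E l) = p\<^sup>2"
  shows "integrable M (\<lambda>\<omega>. (\<Sum>k<m. indicator (E k) \<omega> - p)\<^sup>2)"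
    and "(\<integral>\<omega>. (\<Sum>k<m. indicator (E k) \<omega> - p)\<^sup>2 \<partial>M) = real m * (p - p\<^sup>2)"
proof -
  define D where "D \<omega> = (\<Sum>k<m. indicator (E k) \<omega> - p)" for \<omega>
  have ind_int: "integrable M (indicator A :: 'a \<Rightarrow> real)" if "A \<in> events" for A
    using that by (intro integrable_real_indicator) (auto simp: less_top[symmetric])
  have prod: "(indicator (E k) \<omega> - p) * (indicator (E l) \<omega> - p)
      = indicator (E k \<inter> E l) \<omega> - p * indicator (E k) \<omega> - p * indicator (E l) \<omega> + p\<^sup>2" for k l \<omega>
    by (simp add: indicator_inter_arith algebra_simps power2_eq_square)
  have int_prod: "integrable M (\<lambda>\<omega>. (indicator (E k) \<omega> - p) * (indicator (E l) \<omega> - p))" for k l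
    unfolding prod using E by (intro Bochner_Integration.integrable_add Bochner_Integration.integrable_diff
      integrable_mult_right ind_int) auto
  have cov: "(\<integral>\<omega>. (indicator (E k) \<omega> - p) * (indicator (E l) \<omega> - p) \<partial>M) = (if k = l then p - p\<^sup>2 else 0)"
    for k l
  proof -
    have "(\<integral>\<omega>. (indicator (E k) \<omega> - p) * (indicator (E l) \<omega> - p) \<partial>M)
        = prob (E k \<inter> E l) - p * prob (E k) - p * prob (E l) + p\<^sup>2"
      unfolding prod using E ind_int[of "E k \<inter> E l"] ind_int[of "E k"] ind_int[of "E l"]
      by (simp add: prob_space)
    then show ?thesis
      using pE pEE by (simp add: power2_eq_square)
  qed
  have square: "(D \<omega>)\<^sup>2 = (\<Sum>k<m. \<Sum>l<m. (indicator (E k) \<omega> - p) * (indicator (E l) \<omega> - p))" for \<omega>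
    unfolding D_def by (simp add: power2_eq_square sum_product)
  have "integrable M (\<lambda>\<omega>. (D \<omega>)\<^sup>2)"
    unfolding square using int_prod by auto
  then show "integrable M (\<lambda>\<omega>. (\<Sum>k<m. indicator (E k) \<omega> - p)\<^sup>2)"
    by (simp only: D_def)
  have "(\<integral>\<omega>. (D \<omega>)\<^sup>2 \<partial>M) = (\<Sum>k<m. \<Sum>l<m. if k = l then p - p\<^sup>2 else 0)"
    unfolding square using int_prod by (simp add: integral_sum cov)
  then show "(\<integral>\<omega>. (\<Sum>k<m. indicator (E k) \<omega> - p)\<^sup>2 \<partial>M) = real m * (p - p\<^sup>2)"
    by (simp add: D_def)
qed

lemma prob_count_le_half_mean:
  fixes E :: "nat \<Rightarrow> 'a set" and p :: real
  assumes E: "\<And>k. E k \<in> events" and pE: "\<And>k. prob (E k) = p"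
    and pEE: "\<And>k l. k \<noteq> l \<Longrightarrow> prob (E k \<inter> E l) = p\<^sup>2"
    and "0 < m" "0 < p"
  shows "prob {\<omega>\<in>space M. (\<Sum>k<m. indicator (E k) \<omega>) \<le> real m * p / 2} \<le> 4 / (real m * p)"
proof -
  define D where "D \<omega> = (\<Sum>k<m. indicator (E k) \<omega> - p)" for \<omega>
  have D: "integrable M (\<lambda>\<omega>. (D \<omega>)\<^sup>2)" "(\<integral>\<omega>. (D \<omega>)\<^sup>2 \<partial>M) = real m * (p - p\<^sup>2)"
    unfolding D_def by (rule integral_square_sum_centered_indicators; use E pE pEE in auto)+
  have [measurable]: "(\<lambda>\<omega>. (D \<omega>)\<^sup>2) \<in> borel_measurable M"
    using D(1) by auto
  have "{\<omega>\<in>space M. (\<Sum>k<m. indicator (E k) \<omega>) \<le> real m * p / 2}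
      \<subseteq> {\<omega>\<in>space M. (real m * p / 2)\<^sup>2 \<le> (D \<omega>)\<^sup>2}"
  proof safe
    fix \<omega> assume "(\<Sum>k<m. indicator (E k) \<omega>) \<le> real m * p / 2"
    then have "real m * p / 2 \<le> - D \<omega>"
      by (simp add: D_def sum_subtractf mult.commute)
    then show "(real m * p / 2)\<^sup>2 \<le> (D \<omega>)\<^sup>2"
      using assms power_mono[of "real m * p / 2" "- D \<omega>" 2] by simp
  qed
  then have "prob {\<omega>\<in>space M. (\<Sum>k<m. indicator (E k) \<omega>) \<le> real m * p / 2}
      \<le> prob {\<omega>\<in>space M. (real m * p / 2)\<^sup>2 \<le> (D \<omega>)\<^sup>2}"
    by (intro finite_measure_mono) measurable
  also have "\<dots> \<le> (\<integral>\<omega>. (D \<omega>)\<^sup>2 \<partial>M) / (real m * p / 2)\<^sup>2"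
    using assms by (intro integral_Markov_inequality_measure[OF D(1)]) auto
  also have "\<dots> = real m * (p - p\<^sup>2) / (real m * p / 2)\<^sup>2"
    by (simp only: D(2))
  also have "\<dots> = 4 * (1 - p) / (real m * p)"
    using assms by (simp add: field_simps power2_eq_square)
  also have "\<dots> \<le> 4 / (real m * p)"
    using assms by (intro divide_right_mono) auto
  finally show ?thesis .
qed

lemma Bstat_measurable:
  assumes "\<forall>i\<ge>1. eps i \<in> borel_measurable M"
  shows "Bstat h a b eps n \<in> borel_measurable M"
  unfolding Bstat_def Yobs_def
proof (intro borel_measurable_times borel_measurable_const borel_measurable_sum
    borel_measurable_abs borel_measurable_diff borel_measurable_add)
  fix i assume "i \<in> {2..n}"
  then show "eps i \<in> borel_measurable M" "eps (i - 1) \<in> borel_measurable M"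
    using assms by auto
qed

lemma prob_crossing_events:
  fixes eps :: "nat \<Rightarrow> 'a \<Rightarrow> real" and t1 t2 :: real
  assumes ind: "indep_vars (\<lambda>_. borel) eps {1..}"
    and iid: "\<forall>i\<ge>1. distr M borel (eps i) = distr M borel (eps 1)"
  defines "E k \<equiv> {\<omega>\<in>space M. eps (2*k+1) \<omega> \<le> t1 \<and> t2 \<le> eps (2*k+2) \<omega>}"
    and "p \<equiv> prob {\<omega>\<in>space M. eps 1 \<omega> \<le> t1} * prob {\<omega>\<in>space M. t2 \<le> eps 1 \<omega>}"
  shows "E k \<in> events" and "prob (E k) = p" and "k \<noteq> l \<Longrightarrow> prob (E k \<inter> E l) = p\<^sup>2"
proof -
  have meas: "eps i \<in> borel_measurable M" if "1 \<le> i" for i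
    using ind that by (auto simp: indep_vars_def)
  then have meas1 [measurable]: "eps 1 \<in> borel_measurable M"
    and [measurable]: "eps (2*k+1) \<in> borel_measurable M" "eps (2*k+2) \<in> borel_measurable M" for k
    by auto
  show "E k \<in> events"
    unfolding E_def by measurable
  define A where "A i = (if odd i then {..t1} else {t2..})" for i :: nat
  define r where "r i = prob (eps 1 -` A i \<inter> space M)" for i
  have r_odd: "r i = prob {\<omega>\<in>space M. eps 1 \<omega> \<le> t1}" if "odd i" for i
    using that by (auto simp: r_def A_def intro!: arg_cong[where f=prob])
  have r_even: "r i = prob {\<omega>\<in>space M. t2 \<le> eps 1 \<omega>}" if "even i" for i
    using that by (auto simp: r_def A_def intro!: arg_cong[where f=prob])
  have A_borel: "A i \<in> sets borel" for i
    by (simp add: A_def)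
  \<comment> \<open>Not \<open>using iid by simp\<close>: as a rewrite rule, iid loops on \<open>eps 1\<close>.\<close>
  have iid_on: "\<forall>i\<in>{1..}. distr M borel (eps i) = distr M borel (eps 1)"
    using iid by (metis atLeast_iff)
  have prob_INT: "prob (\<Inter>i\<in>J. eps i -` A i \<inter> space M) = (\<Prod>i\<in>J. r i)"
    if "finite J" "J \<noteq> {}" "J \<subseteq> {1..}" for J
    unfolding r_def by (rule prob_INT_vimage_iid[OF ind iid_on meas1 that A_borel])
  have E_INT: "E k = (\<Inter>i\<in>{2*k+1, 2*k+2}. eps i -` A i \<inter> space M)" for k
    by (auto simp: E_def A_def)
  have "prob (E k) = (\<Prod>i\<in>{2*k+1, 2*k+2}. r i)"
    unfolding E_INT by (rule prob_INT) auto
  then show "prob (E k) = p"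
    by (simp add: r_odd r_even p_def)
  assume "k \<noteq> l"
  have "E k \<inter> E l = (\<Inter>i\<in>{2*k+1, 2*k+2, 2*l+1, 2*l+2}. eps i -` A i \<inter> space M)"
    unfolding E_INT by auto
  then have "prob (E k \<inter> E l) = (\<Prod>i\<in>{2*k+1, 2*k+2, 2*l+1, 2*l+2}. r i)"
    by (simp only:) (rule prob_INT, auto)
  moreover have "2*k+1 \<noteq> 2*l+2" "2*k+2 \<noteq> 2*l+1"
    by presburger+
  ultimately show "prob (E k \<inter> E l) = p\<^sup>2"
    using \<open>k \<noteq> l\<close> by (simp add: r_odd r_even p_def power2_eq_square)
qed

lemma prob_few_crossings:
  fixes eps :: "nat \<Rightarrow> 'a \<Rightarrow> real" and t1 t2 :: real and m :: nat
  assumes ind: "indep_vars (\<lambda>_. borel) eps {1..}"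
    and iid: "\<forall>i\<ge>1. distr M borel (eps i) = distr M borel (eps 1)"
    and "0 < m"
  defines "p \<equiv> prob {\<omega>\<in>space M. eps 1 \<omega> \<le> t1} * prob {\<omega>\<in>space M. t2 \<le> eps 1 \<omega>}"
  assumes "0 < p"
  shows "prob {\<omega>\<in>space M. (\<Sum>k<m. of_bool (eps (2*k+1) \<omega> \<le> t1 \<and> t2 \<le> eps (2*k+2) \<omega>))
                            \<le> real m * p / 2}
           \<le> 4 / (real m * p)"
proof -
  define E where "E k = {\<omega>\<in>space M. eps (2*k+1) \<omega> \<le> t1 \<and> t2 \<le> eps (2*k+2) \<omega>}" for k
  have "prob {\<omega>\<in>space M. (\<Sum>k<m. indicator (E k) \<omega>) \<le> real m * p / 2} \<le> 4 / (real m * p)"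
    by (rule prob_count_le_half_mean)
      (use prob_crossing_events[OF ind iid] \<open>0 < m\<close> \<open>0 < p\<close> in \<open>auto simp: E_def p_def\<close>)
  moreover have "{\<omega>\<in>space M. (\<Sum>k<m. indicator (E k) \<omega>) \<le> real m * p / 2}
      = {\<omega>\<in>space M. (\<Sum>k<m. of_bool (eps (2*k+1) \<omega> \<le> t1 \<and> t2 \<le> eps (2*k+2) \<omega>)) \<le> real m * p / 2}"
    by (auto simp: E_def indicator_def)
  ultimately show ?thesis
    by simp
qed

lemma prob_abs_Bstat_gt_ge:
  fixes eps :: "nat \<Rightarrow> 'a \<Rightarrow> real"
  assumes ind: "indep_vars (\<lambda>_. borel) eps {1..}"
    and iid: "\<forall>i\<ge>1. distr M borel (eps i) = distr M borel (eps 1)"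
    and "t1 < t2" and C0: "\<forall>n. \<bar>Bzero h a b n\<bar> \<le> C0" and "0 < m"
  defines "p \<equiv> prob {\<omega>\<in>space M. eps 1 \<omega> \<le> t1} * prob {\<omega>\<in>space M. t2 \<le> eps 1 \<omega>}"
  assumes "0 < p" and m: "C + C0 \<le> (t2 - t1) * (real m * p / 2) / sqrt (2 * real m)"
  shows "1 - 4 / (real m * p) \<le> prob {\<omega>\<in>space M. C < \<bar>Bstat h a b eps (2*m) \<omega>\<bar>}"
proof -
  have meas: "\<forall>i\<ge>1. eps i \<in> borel_measurable M"
    using ind by (auto simp: indep_vars_def)
  then have [measurable]: "eps (2*k+1) \<in> borel_measurable M" "eps (2*k+2) \<in> borel_measurable M" for k
    by auto
  define N where "N \<omega> = (\<Sum>k<m. of_bool (eps (2*k+1) \<omega> \<le> t1 \<and> t2 \<le> eps (2*k+2) \<omega>) :: real)" for \<omega>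
  define S where "S = {\<omega>\<in>space M. N \<omega> \<le> real m * p / 2}"
  have "S \<in> events"
    unfolding S_def N_def by measurable
  have "prob S \<le> 4 / (real m * p)"
    unfolding S_def N_def p_def using prob_few_crossings[OF ind iid \<open>0 < m\<close>] \<open>0 < p\<close> p_def by simp
  have large: "C < \<bar>Bstat h a b eps (2*m) \<omega>\<bar>" if "\<omega> \<in> space M - S" for \<omega>
  proof -
    note m
    also have "(t2 - t1) * (real m * p / 2) / sqrt (2 * real m) < (t2 - t1) * N \<omega> / sqrt (2 * real m)"
      using that \<open>t1 < t2\<close> \<open>0 < m\<close>
      by (intro divide_strict_right_mono mult_strict_left_mono) (auto simp: S_def)
    also have "\<dots> \<le> Bstat h a b eps (2*m) \<omega> + C0"
      using Bstat_ge_crossings[where m=m and eps=eps and \<omega>=\<omega> and h=h and a=a and b=b,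
          OF less_imp_le[OF \<open>t1 < t2\<close>]] C0[rule_format, of "2*m"]
      unfolding N_def by linarith
    finally show ?thesis
      by linarith
  qed
  have "1 - 4 / (real m * p) \<le> prob (space M - S)"
    using \<open>prob S \<le> 4 / (real m * p)\<close> prob_compl[OF \<open>S \<in> events\<close>] by linarith
  also have "\<dots> \<le> prob {\<omega>\<in>space M. C < \<bar>Bstat h a b eps (2*m) \<omega>\<bar>}"
  proof (rule finite_measure_mono)
    have "Bstat h a b eps (2*m) \<in> borel_measurable M"
      by (rule Bstat_measurable[OF meas])
    then show "{\<omega>\<in>space M. C < \<bar>Bstat h a b eps (2*m) \<omega>\<bar>} \<in> events"
      by measurable
  qed (use large in blast)
  finally show ?thesis .
qed

lemma Bstat_not_bounded_in_prob:
  fixes eps :: "nat \<Rightarrow> 'a \<Rightarrow> real"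
  assumes ind: "indep_vars (\<lambda>_. borel) eps {1..}"
    and iid: "\<forall>i\<ge>1. distr M borel (eps i) = distr M borel (eps 1)"
    and "t1 < t2" "0 < prob {\<omega>\<in>space M. eps 1 \<omega> \<le> t1}" "0 < prob {\<omega>\<in>space M. t2 \<le> eps 1 \<omega>}"
    and "Bseq (\<lambda>n. Bzero h a b n)"
  shows "\<not> bounded_in_prob M (\<lambda>n. Bstat h a b eps n)"
proof
  assume "bounded_in_prob M (\<lambda>n. Bstat h a b eps n)"
  then obtain C n0 where C: "\<forall>n\<ge>n0. prob {\<omega>\<in>space M. \<bar>Bstat h a b eps n \<omega>\<bar> > C} < 1/2"
    unfolding bounded_in_prob_def by (meson zero_less_divide_1_iff zero_less_numeral)
  obtain C0 where C0: "\<forall>n. \<bar>Bzero h a b n\<bar> \<le> C0"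
    using \<open>Bseq (\<lambda>n. Bzero h a b n)\<close> by (auto elim: BseqE)
  define p where "p = prob {\<omega>\<in>space M. eps 1 \<omega> \<le> t1} * prob {\<omega>\<in>space M. t2 \<le> eps 1 \<omega>}"
  have "0 < p" "0 < t2 - t1"
    using assms(3-5) by (auto simp: p_def)
  then have "\<forall>\<^sub>F m in sequentially. C + C0 \<le> (t2 - t1) * (real m * p / 2) / sqrt (2 * real m)"
    and "\<forall>\<^sub>F m in sequentially. 4 / (real m * p) \<le> 1/2"
    by real_asymp+
  moreover have "\<forall>\<^sub>F m in sequentially. n0 \<le> 2 * m \<and> 0 < m"
    by (rule eventually_sequentiallyI[of "n0 + 1"]) auto
  ultimately have "\<forall>\<^sub>F m in sequentially. C + C0 \<le> (t2 - t1) * (real m * p / 2) / sqrt (2 * real m)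
      \<and> 4 / (real m * p) \<le> 1/2 \<and> n0 \<le> 2 * m \<and> 0 < m"
    by eventually_elim blast
  then obtain m where m: "C + C0 \<le> (t2 - t1) * (real m * p / 2) / sqrt (2 * real m)"
    "4 / (real m * p) \<le> 1/2" "n0 \<le> 2 * m" "0 < m"
    using eventually_happens'[OF sequentially_bot] by blast
  have "1 - 4 / (real m * p) \<le> prob {\<omega>\<in>space M. C < \<bar>Bstat h a b eps (2*m) \<omega>\<bar>}"
    unfolding p_def by (rule prob_abs_Bstat_gt_ge[OF ind iid \<open>t1 < t2\<close> C0 \<open>0 < m\<close>])
      (use \<open>0 < p\<close> m(1) in \<open>simp_all add: p_def\<close>)
  with C m(2,3) show False
    by fastforce
qed

lemma cdf_distr_eq_step_if_Bstat_bounded_in_prob: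
  fixes eps :: "nat \<Rightarrow> 'a \<Rightarrow> real"
  assumes ind: "indep_vars (\<lambda>_. borel) eps {1..}"
    and iid: "\<forall>i\<ge>1. distr M borel (eps i) = distr M borel (eps 1)"
    and "integrable M (eps 1)" "expectation (eps 1) = 0"
    and bseq: "Bseq (\<lambda>n. Bzero h a b n)" and bounded: "bounded_in_prob M (\<lambda>n. Bstat h a b eps n)"
  shows "cdf (distr M borel (eps 1)) = (\<lambda>x. if 0 \<le> x then 1 else 0)"
proof (rule cdf_distr_eq_step_if_AE_zero)
  show meas [measurable]: "eps 1 \<in> borel_measurable M"
    using ind by (auto simp: indep_vars_def)
  show "AE \<omega> in M. eps 1 \<omega> = 0"
  proof (rule ccontr)
    assume "\<not> (AE \<omega> in M. eps 1 \<omega> = 0)"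
    then obtain t1 t2 where levels: "t1 < t2" "0 < prob {\<omega>\<in>space M. eps 1 \<omega> \<le> t1}"
      "0 < prob {\<omega>\<in>space M. t2 \<le> eps 1 \<omega>}"
      using exists_two_sided_levels[OF meas] assms(3,4) by blast
    show False
      using Bstat_not_bounded_in_prob[OF ind iid levels bseq] bounded by contradiction
  qed
qed

end

theorem theorem4:
  fixes h :: "real \<Rightarrow> real" and a b :: real
  assumes "a < b"
    and "\<exists>h'. (\<forall>x\<in>{a..b}. (h has_real_derivative h' x) (at x within {a..b}))
              \<and> continuous_on {a..b} h' \<and> bounded (h' ` {a..b})"
  shows "Bseq (\<lambda>n. Bzero h a b n)
    \<and> (\<forall>(M :: 'a measure) (eps :: nat \<Rightarrow> 'a \<Rightarrow> real).
         prob_space M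
         \<and> (\<forall>i\<ge>1. eps i \<in> borel_measurable M)
         \<and> prob_space.indep_vars M (\<lambda>_. borel) eps {1..}
         \<and> (\<forall>i\<ge>1. distr M borel (eps i) = distr M borel (eps 1))
         \<and> integrable M (eps 1) \<and> prob_space.expectation M (eps 1) = 0
         \<and> integrable M (\<lambda>\<omega>. (eps 1 \<omega>)\<^sup>2)
         \<and> bounded_in_prob M (\<lambda>n. Bstat h a b eps n)
         \<longrightarrow> cdf (distr M borel (eps 1)) = (\<lambda>x. if 0 \<le> x then 1 else 0))"
proof -
  obtain h' where "\<forall>x\<in>{a..b}. (h has_real_derivative h' x) (at x within {a..b})"
    and "bounded (h' ` {a..b})"
    using assms(2) by blast
  then have bseq: "Bseq (\<lambda>n. Bzero h a b n)"
    using Bseq_Bzero \<open>a < b\<close> by auto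
  show ?thesis
  proof (intro conjI bseq allI impI, elim conjE)
    fix M :: "'a measure" and eps :: "nat \<Rightarrow> 'a \<Rightarrow> real"
    assume "prob_space M" "prob_space.indep_vars M (\<lambda>_. borel) eps {1..}"
      "\<forall>i\<ge>1. distr M borel (eps i) = distr M borel (eps 1)"
      "integrable M (eps 1)" "prob_space.expectation M (eps 1) = 0"
      "bounded_in_prob M (\<lambda>n. Bstat h a b eps n)"
    then show "cdf (distr M borel (eps 1)) = (\<lambda>x. if 0 \<le> x then 1 else 0)"
      using prob_space.cdf_distr_eq_step_if_Bstat_bounded_in_prob bseq by blast
  qed
qed

end
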